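(* Let $(\alpha_k)_{k\ge1}$ be a sequence of real numbers with $\alpha_k>0$ for all $k\ge1$ such that $\sum_{k=1}^\infty\frac{\alpha_{k+1}^2}{\alpha_k}$ converges. Then $\sum_{k=1}^\infty\alpha_k$ converges. *)

theory Defs
  imports "HOL-Analysis.Analysis"
begin

end

theory Submission
  imports Defs
begin

text \<open>By AM-GM, \<open>2 a(k+1) \<le> a(k+1)\<^sup>2 / a k + a k\<close>. Summing over \<open>k < n\<close> gives
  \<open>2 (S(n+1) - a 0) \<le> B + S n \<le> B + S(n+1)\<close>, where \<open>S\<close> denotes the partial sums of
  \<open>a\<close> and \<open>B\<close> the sum of the convergent series; so the partial sums of the
  positive series \<open>a\<close> stay below \<open>2 a 0 + B\<close>.\<close>

lemma two_mult_le_square_div_add: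
  fixes x y :: real
  assumes "x > 0"
  shows "2 * y \<le> y\<^sup>2 / x + x"
proof -
  have "2 * y * x \<le> y\<^sup>2 + x\<^sup>2"
    using sum_squares_bound[of y x] by (simp add: mult.commute)
  also have "\<dots> = (y\<^sup>2 / x + x) * x"
    using assms by (simp add: field_simps power2_eq_square)
  finally show ?thesis
    using assms by simp
qed

lemma sum_lessThan_Suc_le_square_ratio_sum:
  fixes a :: "nat \<Rightarrow> real"
  assumes pos: "\<And>k. a k > 0"
  shows "sum a {..<Suc n} \<le> 2 * a 0 + (\<Sum>k<n. (a (Suc k))\<^sup>2 / a k)"
proof -
  have "2 * (\<Sum>k<n. a (Suc k)) \<le> (\<Sum>k<n. (a (Suc k))\<^sup>2 / a k + a k)"
    unfolding sum_distrib_left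
    by (intro sum_mono two_mult_le_square_div_add pos)
  also have "\<dots> = (\<Sum>k<n. (a (Suc k))\<^sup>2 / a k) + sum a {..<n}"
    by (rule sum.distrib)
  also have "sum a {..<n} \<le> sum a {..<Suc n}"
    using pos[of n] by simp
  finally show ?thesis
    unfolding sum.lessThan_Suc_shift[of a n] by linarith
qed

lemma summable_if_summable_square_ratio:
  fixes a :: "nat \<Rightarrow> real"
  assumes pos: "\<And>k. a k > 0"
    and conv: "summable (\<lambda>k. (a (Suc k))\<^sup>2 / a k)"
  shows "summable a"
proof (rule summableI_nonneg_bounded)
  let ?B = "\<Sum>k. (a (Suc k))\<^sup>2 / a k"
  have ratio_nonneg: "0 \<le> (a (Suc k))\<^sup>2 / a k" for k
    using pos[of k] by simp
  show "0 \<le> a k" for k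
    using pos[of k] by simp
  show "sum a {..<n} \<le> 2 * a 0 + ?B" for n
  proof (cases n)
    case 0
    have "0 \<le> ?B"
      using conv ratio_nonneg by (rule suminf_nonneg)
    with pos[of 0] 0 show ?thesis by simp
  next
    case (Suc m)
    have "(\<Sum>k<m. (a (Suc k))\<^sup>2 / a k) \<le> ?B"
      using conv ratio_nonneg by (intro sum_le_suminf) auto
    with sum_lessThan_Suc_le_square_ratio_sum[of a m] pos Suc show ?thesis
      by simp
  qed
qed

theorem lemma6p1:
  fixes \<alpha> :: "nat \<Rightarrow> real"
  assumes pos: "\<And>k. k \<ge> 1 \<Longrightarrow> \<alpha> k > 0"
    and conv: "summable (\<lambda>k. (\<alpha> (Suc (Suc k)))\<^sup>2 / \<alpha> (Suc k))"
  shows "summable (\<lambda>k. \<alpha> (Suc k))"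
  using summable_if_summable_square_ratio[of "\<lambda>k. \<alpha> (Suc k)"] pos conv
  by simp

end
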